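(* Let $X$ be a connected, locally path connected space and $x_0\in X$. The following are equivalent: (1) $\pi_1^{wh}(X,x_0)$ is $T_0$; (2) $\pi_1^{wh}(X,x_0)$ is $T_1$; (3) $\pi_1^{wh}(X,x_0)$ is $T_2$; (4) $\pi_1^{wh}(X,x_0)$ is $T_3$ (regular and $T_1$); (5) $\pi^s_1(X,x_0)=1$; (6) $\pi_1^{wh}(X,x_0)$ is totally separated. Moreover, $\pi_1^{wh}(X,x_0)$ is always regular.
   Context: $\pi_1^{wh}(X,x_0)$ denotes $\pi_1(X,x_0)$ with the whisker topology, which has as a basis the sets $[\alpha]\,i_*\pi_1(U,x_0)$ for $[\alpha]\in\pi_1(X,x_0)$ and $U$ an open neighborhood of $x_0$ ($i_*$ induced by inclusion). A loop $\beta$ at $x_0$ is small if for every open neighborhood $U$ of $x_0$ it is homotopic rel endpoints to a loop in $U$; $\pi^s_1(X,x_0)$ is the set of homotopy classes of small loops at $x_0$. A space is totally separated if any two distinct points are separated by a clopen set containing one but not the other. Regular means: a point and a closed set not containing it have disjoint open neighborhoods. *)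

theory Defs
  imports "HOL-Analysis.Analysis"
begin

definition loop_at :: "'a topology \<Rightarrow> 'a \<Rightarrow> (real \<Rightarrow> 'a) \<Rightarrow> bool" where
  "loop_at X x0 p \<longleftrightarrow> pathin X p \<and> p 0 = x0 \<and> p 1 = x0"

definition homotopic_paths_in :: "'a topology \<Rightarrow> (real \<Rightarrow> 'a) \<Rightarrow> (real \<Rightarrow> 'a) \<Rightarrow> bool" where
  "homotopic_paths_in X p q \<longleftrightarrow>
     homotopic_with (\<lambda>r. r 0 = p 0 \<and> r 1 = p 1) (top_of_set {0..1}) X p q"

definition path_join :: "(real \<Rightarrow> 'a) \<Rightarrow> (real \<Rightarrow> 'a) \<Rightarrow> real \<Rightarrow> 'a" where
  "path_join p q = (\<lambda>t. if t \<le> 1/2 then p (2 * t) else q (2 * t - 1))"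

definition loop_class :: "'a topology \<Rightarrow> 'a \<Rightarrow> (real \<Rightarrow> 'a) \<Rightarrow> (real \<Rightarrow> 'a) set" where
  "loop_class X x0 p = {q. loop_at X x0 q \<and> homotopic_paths_in X p q}"

definition fundamental_group :: "'a topology \<Rightarrow> 'a \<Rightarrow> (real \<Rightarrow> 'a) set set" where
  "fundamental_group X x0 = loop_class X x0 ` {p. loop_at X x0 p}"

definition whisker_basis :: "'a topology \<Rightarrow> 'a \<Rightarrow> (real \<Rightarrow> 'a) set set set" where
  "whisker_basis X x0 =
     {{loop_class X x0 (path_join a b) | b. loop_at (subtopology X U) x0 b}
       | a U. loop_at X x0 a \<and> openin X U \<and> x0 \<in> U}"

definition whisker_topology :: "'a topology \<Rightarrow> 'a \<Rightarrow> (real \<Rightarrow> 'a) set topology" where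
  "whisker_topology X x0 = topology_generated_by (whisker_basis X x0)"

definition small_loop :: "'a topology \<Rightarrow> 'a \<Rightarrow> (real \<Rightarrow> 'a) \<Rightarrow> bool" where
  "small_loop X x0 b \<longleftrightarrow> loop_at X x0 b \<and>
     (\<forall>U. openin X U \<and> x0 \<in> U \<longrightarrow>
        (\<exists>c. loop_at (subtopology X U) x0 c \<and> homotopic_paths_in X b c))"

definition small_loop_group :: "'a topology \<Rightarrow> 'a \<Rightarrow> (real \<Rightarrow> 'a) set set" where
  "small_loop_group X x0 = loop_class X x0 ` {b. small_loop X x0 b}"

definition totally_separated_space :: "'a topology \<Rightarrow> bool" where
  "totally_separated_space X \<longleftrightarrow>
     (\<forall>x\<in>topspace X. \<forall>y\<in>topspace X. x \<noteq> y \<longrightarrow>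
        (\<exists>C. closedin X C \<and> openin X C \<and> x \<in> C \<and> y \<notin> C))"

end

theory Submission
  imports Defs
begin

text \<open>For a fixed open neighbourhood \<open>U\<close> of \<open>x0\<close>, the basic sets \<open>[a] i\<^sub>*\<pi>\<^sub>1(U, x0)\<close> are the
  left cosets of one subgroup of \<open>\<pi>\<^sub>1(X, x0)\<close>; they partition \<open>\<pi>\<^sub>1(X, x0)\<close> into open sets, so each of
  them is clopen. Hence the whisker topology is zero-dimensional: it is regular, and \<open>T\<^sub>0\<close> already
  implies total separation, hence \<open>T\<^sub>2\<close> and \<open>T\<^sub>1\<close>. Two classes \<open>[a]\<close> and \<open>[a']\<close> have the same
  neighbourhoods exactly when \<open>[a']\<close> lies in every coset \<open>[a] i\<^sub>*\<pi>\<^sub>1(U, x0)\<close>, i.e. when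
  \<open>a\<^sup>-\<^sup>1 a'\<close> is a small loop; so \<open>T\<^sub>0\<close> holds iff every small loop is null-homotopic.\<close>

text \<open>\<open>path_join\<close> and \<open>path_reverse\<close> are the library's \<open>joinpaths\<close> and \<open>reversepath\<close> without
  the \<open>topological_space\<close> sort constraint, which paths in an abstract \<open>'a topology\<close> cannot meet.\<close>

no_notation joinpaths (infixr \<open>+++\<close> 75)
notation path_join (infixr \<open>+++\<close> 75)

definition path_reverse :: "(real \<Rightarrow> 'a) \<Rightarrow> real \<Rightarrow> 'a" where
  "path_reverse p = (\<lambda>t. p (1 - t))"

section \<open>General topology\<close>

lemma topology_generated_by_nbhd_base:
  assumes base: "\<And>B1 B2 x. B1 \<in> \<B> \<Longrightarrow> B2 \<in> \<B> \<Longrightarrow> x \<in> B1 \<inter> B2 \<Longrightarrow> \<exists>B\<in>\<B>. x \<in> B \<and> B \<subseteq> B1 \<inter> B2"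
    and "openin (topology_generated_by \<B>) S" "x \<in> S"
  shows "\<exists>B\<in>\<B>. x \<in> B \<and> B \<subseteq> S"
proof -
  have "generate_topology_on \<B> S"
    using assms(2) by (simp add: openin_topology_generated_by_iff)
  then have "\<forall>x\<in>S. \<exists>B\<in>\<B>. x \<in> B \<and> B \<subseteq> S"
  proof (induction rule: generate_topology_on.induct)
    case (Int S T)
    show ?case
    proof
      fix x assume "x \<in> S \<inter> T"
      then obtain B1 B2 where "B1 \<in> \<B>" "x \<in> B1" "B1 \<subseteq> S" "B2 \<in> \<B>" "x \<in> B2" "B2 \<subseteq> T"
        using Int.IH by blast
      then show "\<exists>B\<in>\<B>. x \<in> B \<and> B \<subseteq> S \<inter> T"
        using base[of B1 B2 x] by blast
    qed
  next
    case (UN K)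
    show ?case
    proof
      fix x assume "x \<in> \<Union>K"
      then obtain k where "k \<in> K" "x \<in> k" by blast
      with UN.IH obtain B where "B \<in> \<B>" "x \<in> B" "B \<subseteq> k" by blast
      with \<open>k \<in> K\<close> show "\<exists>B\<in>\<B>. x \<in> B \<and> B \<subseteq> \<Union>K" by blast
    qed
  qed auto
  then show ?thesis
    using assms(3) by blast
qed

lemma dim_le_0_t0_imp_totally_separated_space:
  assumes "X dim_le 0" "t0_space X"
  shows "totally_separated_space X"
  unfolding totally_separated_space_def
proof (intro ballI impI)
  have "neighbourhood_base_of (\<lambda>C. closedin X C \<and> openin X C) X"
    using assms(1) by (simp add: dimension_le_0_neighbourhood_base_of_clopen)
  then have clopen_base: "\<exists>C. closedin X C \<and> openin X C \<and> x \<in> C \<and> C \<subseteq> U"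
    if "openin X U" "x \<in> U" for U x
    using that by (simp add: open_neighbourhood_base_of)
  fix x y assume "x \<in> topspace X" "y \<in> topspace X" "x \<noteq> y"
  then obtain U where U: "openin X U" "x \<notin> U \<longleftrightarrow> y \<in> U"
    using assms(2) unfolding t0_space_def by blast
  show "\<exists>C. closedin X C \<and> openin X C \<and> x \<in> C \<and> y \<notin> C"
  proof (cases "x \<in> U")
    case True
    then show ?thesis using clopen_base U by blast
  next
    case False
    then obtain C where "closedin X C" "openin X C" "y \<in> C" "C \<subseteq> U"
      using clopen_base U by blast
    then show ?thesis
      using \<open>x \<in> topspace X\<close> False
      by (intro exI[of _ "topspace X - C"]) (auto simp: openin_diff closedin_diff)
  qed
qed

lemma totally_separated_imp_t0_space:
  assumes "totally_separated_space X"
  shows "t0_space X"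
  unfolding t0_space_def
proof (intro ballI impI)
  fix x y assume "x \<in> topspace X" "y \<in> topspace X" "x \<noteq> y"
  then obtain C where "openin X C" "x \<in> C" "y \<notin> C"
    using assms unfolding totally_separated_space_def by blast
  then show "\<exists>U. openin X U \<and> (x \<notin> U \<longleftrightarrow> y \<in> U)"
    by blast
qed

section \<open>Homotopy of paths in an abstract topological space\<close>

lemma continuous_map_compose_top_of_set:
  assumes "continuous_map (top_of_set A) X h" "continuous_on B m" "m \<in> B \<rightarrow> A"
  shows "continuous_map (top_of_set B) X (h \<circ> m)"
  by (rule continuous_map_compose[OF _ assms(1)]) (use assms in simp)

lemma continuous_map_top_of_set_cases_le:
  fixes c :: "'b::topological_space \<Rightarrow> real"
  assumes "continuous_map (top_of_set {x\<in>S. c x \<le> 0}) X f"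
    and "continuous_map (top_of_set {x\<in>S. 0 \<le> c x}) X g" and "continuous_on S c"
    and "\<And>x. x \<in> S \<Longrightarrow> c x = 0 \<Longrightarrow> f x = g x"
  shows "continuous_map (top_of_set S) X (\<lambda>x. if c x \<le> 0 then f x else g x)"
proof (rule continuous_map_cases_le)
  show "continuous_map (top_of_set S) euclideanreal c" using assms(3) by simp
  have "\<And>P. subtopology (top_of_set S) {x \<in> topspace (top_of_set S). P x} = top_of_set {x\<in>S. P x}"
    by (simp add: subtopology_subtopology Int_def)
  then show "continuous_map (subtopology (top_of_set S) {x \<in> topspace (top_of_set S). c x \<le> 0}) X f"
    and "continuous_map (subtopology (top_of_set S) {x \<in> topspace (top_of_set S). 0 \<le> c x}) X g"
    using assms(1,2) by simp_all
qed (use assms(4) in auto)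

lemma pathin_path_join:
  assumes "pathin X p" "pathin X q" "p 1 = q 0"
  shows "pathin X (p +++ q)"
proof -
  have "continuous_map (top_of_set {0..1})
          X (\<lambda>t. if t - 1/2 \<le> 0 then (p \<circ> (\<lambda>t. 2*t)) t else (q \<circ> (\<lambda>t. 2*t-1)) t)"
  proof (rule continuous_map_top_of_set_cases_le)
    show "continuous_map (top_of_set {t \<in> {0..1}. t - 1/2 \<le> 0}) X (p \<circ> (\<lambda>t. 2*t))"
      using assms(1) unfolding pathin_def
      by (intro continuous_map_compose_top_of_set) (auto intro!: continuous_intros)
    show "continuous_map (top_of_set {t \<in> {0..1}. 0 \<le> t - 1/2}) X (q \<circ> (\<lambda>t. 2*t-1))"
      using assms(2) unfolding pathin_def
      by (intro continuous_map_compose_top_of_set) (auto intro!: continuous_intros)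
    show "(p \<circ> (\<lambda>t. 2*t)) t = (q \<circ> (\<lambda>t. 2*t-1)) t" if "t - 1/2 = 0" for t
      using that assms(3) by (simp add: mult.commute)
  qed (auto intro!: continuous_intros)
  moreover have "p +++ q = (\<lambda>t. if t - 1/2 \<le> 0 then (p \<circ> (\<lambda>t. 2*t)) t else (q \<circ> (\<lambda>t. 2*t-1)) t)"
    by (auto simp: fun_eq_iff path_join_def)
  ultimately show ?thesis unfolding pathin_def by simp
qed

lemma pathin_path_reverse: "pathin X p \<Longrightarrow> pathin X (path_reverse p)"
  unfolding pathin_def path_reverse_def
  using continuous_map_compose_top_of_set[of "{0..1}" X p "{0..1}" "\<lambda>t. 1 - t"]
    continuous_on_op_minus[of "{0..1}" 1]
  by (auto simp: o_def)

lemma homotopic_paths_in_endpoints: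
  assumes "homotopic_paths_in X p q"
  shows "q 0 = p 0 \<and> q 1 = p 1"
  using homotopic_with_imp_property[OF assms[unfolded homotopic_paths_in_def]] by simp

lemma homotopic_paths_in_refl: "pathin X p \<Longrightarrow> homotopic_paths_in X p p"
  unfolding homotopic_paths_in_def pathin_def by simp

lemma homotopic_paths_in_sym:
  assumes "homotopic_paths_in X p q"
  shows "homotopic_paths_in X q p"
proof -
  have ends: "q 0 = p 0" "q 1 = p 1"
    using homotopic_paths_in_endpoints[OF assms] by auto
  show ?thesis
    using assms homotopic_with_sym unfolding homotopic_paths_in_def ends by blast
qed

lemma homotopic_paths_in_trans [trans]:
  assumes "homotopic_paths_in X p q" "homotopic_paths_in X q r"
  shows "homotopic_paths_in X p r"
proof -
  have ends: "q 0 = p 0" "q 1 = p 1"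
    using homotopic_paths_in_endpoints[OF assms(1)] by auto
  show ?thesis
    using assms homotopic_with_trans unfolding homotopic_paths_in_def ends by blast
qed

lemma homotopic_paths_in_reparametrize:
  assumes p: "pathin X p" and "continuous_on {0..1} f" "continuous_on {0..1} g"
    and "f \<in> {0..1} \<rightarrow> {0..1}" "g \<in> {0..1} \<rightarrow> {0..1}" and "f 0 = g 0" "f 1 = g 1"
  shows "homotopic_paths_in X (p \<circ> f) (p \<circ> g)"
proof -
  have "homotopic_paths {0..1} f g"
    using assms by (intro homotopic_paths_linear closed_segment_subset)
      (auto simp: path_def pathstart_def pathfinish_def)
  then have "homotopic_with (\<lambda>r. r 0 = f 0 \<and> r 1 = f 1) (top_of_set {0..1}) (top_of_set {0..1}) f g"
    unfolding homotopic_paths_def pathstart_def pathfinish_def by simp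
  then show ?thesis unfolding homotopic_paths_in_def
    by (rule homotopic_with_compose_continuous_map_left) (use p in \<open>auto simp: pathin_def\<close>)
qed

lemma homotopic_paths_in_reparametrize_id:
  assumes "pathin X p" and "continuous_on {0..1} f" and "f \<in> {0..1} \<rightarrow> {0..1}"
    and "f 0 = 0" "f 1 = 1"
  shows "homotopic_paths_in X (p \<circ> f) p"
  using homotopic_paths_in_reparametrize[OF assms(1,2) continuous_on_id assms(3)] assms(4,5)
  by (simp add: o_def)

lemma homotopic_paths_in_const_join:
  assumes "pathin X p"
  shows "homotopic_paths_in X ((\<lambda>t. p 0) +++ p) p"
proof -
  have "(\<lambda>t. p 0) +++ p = p \<circ> (\<lambda>t. if t \<le> 1/2 then 0 else 2*t-1)"
    by (auto simp: fun_eq_iff path_join_def)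
  moreover have "continuous_on {0..1} (\<lambda>t::real. if t \<le> 1/2 then 0 else 2*t-1)"
    by (rule continuous_on_cases_1 continuous_intros | force)+
  ultimately show ?thesis
    using assms by (auto intro!: homotopic_paths_in_reparametrize_id)
qed

lemma homotopic_paths_in_join_const:
  assumes "pathin X p"
  shows "homotopic_paths_in X (p +++ (\<lambda>t. p 1)) p"
proof -
  have "p +++ (\<lambda>t. p 1) = p \<circ> (\<lambda>t. if t \<le> 1/2 then 2*t else 1)"
    by (auto simp: fun_eq_iff path_join_def)
  moreover have "continuous_on {0..1} (\<lambda>t::real. if t \<le> 1/2 then 2*t else 1)"
    by (rule continuous_on_cases_1 continuous_intros | force)+
  ultimately show ?thesis
    using assms by (auto intro!: homotopic_paths_in_reparametrize_id)
qed

lemma homotopic_paths_in_assoc: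
  assumes "pathin X p" "pathin X q" "pathin X r" and "p 1 = q 0" "q 1 = r 0"
  shows "homotopic_paths_in X ((p +++ q) +++ r) (p +++ (q +++ r))"
proof -
  define f :: "real \<Rightarrow> real"
    where "f t = (if t \<le> 1/4 then 2*t else if t \<le> 1/2 then t + 1/4 else (t+1)/2)" for t
  have "(p +++ q) +++ r = (p +++ (q +++ r)) \<circ> f"
    by (auto simp: fun_eq_iff path_join_def f_def field_simps)
      (auto intro!: arg_cong[where f=q] arg_cong[where f=r])
  moreover have "continuous_on {0..1} f"
    unfolding f_def by (rule continuous_on_cases_1 continuous_intros | force)+
  moreover have "pathin X (p +++ (q +++ r))"
    using assms by (intro pathin_path_join) (auto simp: path_join_def)
  ultimately show ?thesis
    by (auto simp: f_def intro!: homotopic_paths_in_reparametrize_id)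
qed

lemma homotopic_paths_in_join_reverse:
  assumes "pathin X p"
  shows "homotopic_paths_in X (p +++ path_reverse p) (\<lambda>t. p 0)"
proof -
  have "p +++ path_reverse p = p \<circ> (\<lambda>t. if t \<le> 1/2 then 2*t else 2 - 2*t)"
    by (auto simp: fun_eq_iff path_join_def path_reverse_def)
  moreover have "continuous_on {0..1} (\<lambda>t::real. if t \<le> 1/2 then 2*t else 2 - 2*t)"
    by (rule continuous_on_cases_1 continuous_intros | force)+
  ultimately show ?thesis
    using homotopic_paths_in_reparametrize[OF assms, of _ "\<lambda>t. 0"] by (auto simp: o_def)
qed

lemma homotopic_paths_in_reverse_join:
  assumes "pathin X p"
  shows "homotopic_paths_in X (path_reverse p +++ p) (\<lambda>t. p 1)"
proof -
  have "path_reverse p +++ p = p \<circ> (\<lambda>t. if t \<le> 1/2 then 1 - 2*t else 2*t - 1)"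
    by (auto simp: fun_eq_iff path_join_def path_reverse_def)
  moreover have "continuous_on {0..1} (\<lambda>t::real. if t \<le> 1/2 then 1 - 2*t else 2*t - 1)"
    by (rule continuous_on_cases_1 continuous_intros | force)+
  ultimately show ?thesis
    using homotopic_paths_in_reparametrize[OF assms, of _ "\<lambda>t. 1"] by (auto simp: o_def)
qed

lemma homotopic_paths_in_join:
  assumes "homotopic_paths_in X p p'" "homotopic_paths_in X q q'" and "p 1 = q 0"
  shows "homotopic_paths_in X (p +++ q) (p' +++ q')"
proof -
  let ?S = "{0..1::real} \<times> {0..1::real}"
  obtain H where H: "continuous_map (top_of_set ?S) X H"
    and H01: "\<And>t. H (0, t) = p t" "\<And>t. H (1, t) = p' t"
    and Hends: "\<And>s. s \<in> {0..1} \<Longrightarrow> H (s, 0) = p 0 \<and> H (s, 1) = p 1"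
    using assms(1) unfolding homotopic_paths_in_def homotopic_with_def by auto
  obtain K where K: "continuous_map (top_of_set ?S) X K"
    and K01: "\<And>t. K (0, t) = q t" "\<And>t. K (1, t) = q' t"
    and Kends: "\<And>s. s \<in> {0..1} \<Longrightarrow> K (s, 0) = q 0 \<and> K (s, 1) = q 1"
    using assms(2) unfolding homotopic_paths_in_def homotopic_with_def by auto
  define L where "L z = (if snd z - 1/2 \<le> 0 then (H \<circ> (\<lambda>z. (fst z, 2 * snd z))) z
                        else (K \<circ> (\<lambda>z. (fst z, 2 * snd z - 1))) z)" for z
  have "continuous_map (top_of_set ?S) X L"
    unfolding L_def
  proof (rule continuous_map_top_of_set_cases_le)
    show "continuous_map (top_of_set {z \<in> ?S. snd z - 1/2 \<le> 0}) X (H \<circ> (\<lambda>z. (fst z, 2 * snd z)))"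
      by (rule continuous_map_compose_top_of_set[OF H]) (auto intro!: continuous_intros)
    show "continuous_map (top_of_set {z \<in> ?S. 0 \<le> snd z - 1/2}) X (K \<circ> (\<lambda>z. (fst z, 2 * snd z - 1)))"
      by (rule continuous_map_compose_top_of_set[OF K]) (auto intro!: continuous_intros)
    show "(H \<circ> (\<lambda>z. (fst z, 2 * snd z))) z = (K \<circ> (\<lambda>z. (fst z, 2 * snd z - 1))) z"
      if "z \<in> ?S" "snd z - 1/2 = 0" for z
    proof -
      have "2 * snd z = 1" "2 * snd z - 1 = 0" using that(2) by auto
      then show ?thesis
        using Hends[of "fst z"] Kends[of "fst z"] that(1) assms(3) by (auto simp: mem_Times_iff)
    qed
  qed (auto intro!: continuous_intros)
  moreover have "L (0, t) = (p +++ q) t" "L (1, t) = (p' +++ q') t" for t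
    by (simp_all add: L_def path_join_def H01 K01)
  moreover have "L (s, 0) = (p +++ q) 0" "L (s, 1) = (p +++ q) 1" if "s \<in> {0..1}" for s
    using Hends[OF that] Kends[OF that] by (simp_all add: L_def path_join_def)
  ultimately show ?thesis
    unfolding homotopic_paths_in_def homotopic_with_def by (intro exI[of _ L]) auto
qed

section \<open>Loops and their homotopy classes\<close>

lemma loop_at_imp_pathin: "loop_at X x0 p \<Longrightarrow> pathin X p"
  by (simp add: loop_at_def)

lemma loop_at_imp_in_topspace: "loop_at X x0 p \<Longrightarrow> x0 \<in> topspace X"
  unfolding loop_at_def using path_start_in_topspace by metis

lemma loop_at_const [simp]: "loop_at X x0 (\<lambda>t. x0) \<longleftrightarrow> x0 \<in> topspace X"
  by (simp add: loop_at_def)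

lemma loop_at_subtopology_imp: "loop_at (subtopology X U) x0 p \<Longrightarrow> loop_at X x0 p"
  by (simp add: loop_at_def pathin_subtopology)

lemma loop_at_subtopology_mono:
  "loop_at (subtopology X V) x0 p \<Longrightarrow> V \<subseteq> U \<Longrightarrow> loop_at (subtopology X U) x0 p"
  by (auto simp: loop_at_def pathin_subtopology)

lemma loop_at_path_join: "loop_at X x0 p \<Longrightarrow> loop_at X x0 q \<Longrightarrow> loop_at X x0 (p +++ q)"
  by (simp add: loop_at_def pathin_path_join) (simp add: path_join_def)

lemma loop_at_path_reverse: "loop_at X x0 p \<Longrightarrow> loop_at X x0 (path_reverse p)"
  by (simp add: loop_at_def pathin_path_reverse) (simp add: path_reverse_def)

lemma loop_class_eq_iff:
  assumes "loop_at X x0 p" "loop_at X x0 q"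
  shows "loop_class X x0 p = loop_class X x0 q \<longleftrightarrow> homotopic_paths_in X p q"
proof
  assume "loop_class X x0 p = loop_class X x0 q"
  moreover have "p \<in> loop_class X x0 p"
    using assms(1) by (simp add: loop_class_def homotopic_paths_in_refl loop_at_imp_pathin)
  ultimately show "homotopic_paths_in X p q"
    by (auto simp: loop_class_def intro: homotopic_paths_in_sym)
qed (auto simp: loop_class_def intro: homotopic_paths_in_sym homotopic_paths_in_trans)

lemma homotopic_paths_in_reverse_join_left_iff:
  assumes a: "loop_at X x0 a" and x: "loop_at X x0 x" and y: "loop_at X x0 y"
  shows "homotopic_paths_in X (path_reverse a +++ x) y \<longleftrightarrow> homotopic_paths_in X x (a +++ y)"
proof -
  have pa: "pathin X a" "pathin X (path_reverse a)" and px: "pathin X x" and py: "pathin X y"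
    using a x y by (auto simp: loop_at_def pathin_path_reverse)
  have ends: "a 0 = x0" "a 1 = x0" "x 0 = x0" "y 0 = x0" "y 1 = x0"
    "path_reverse a 0 = x0" "path_reverse a 1 = x0"
    using a x y by (auto simp: loop_at_def path_reverse_def)
  note refl = homotopic_paths_in_refl and join = homotopic_paths_in_join
  show ?thesis
  proof
    assume h: "homotopic_paths_in X (path_reverse a +++ x) y"
    have "homotopic_paths_in X x ((\<lambda>t. x0) +++ x)"
      using homotopic_paths_in_const_join[OF px] ends by (simp add: homotopic_paths_in_sym)
    also have "homotopic_paths_in X \<dots> ((a +++ path_reverse a) +++ x)"
      using join[OF homotopic_paths_in_sym[OF homotopic_paths_in_join_reverse[OF pa(1)]] refl[OF px]]
      by (simp add: ends)
    also have "homotopic_paths_in X \<dots> (a +++ (path_reverse a +++ x))"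
      using homotopic_paths_in_assoc[OF pa px] by (simp add: ends)
    also have "homotopic_paths_in X \<dots> (a +++ y)"
      using join[OF refl[OF pa(1)] h] by (simp add: ends path_join_def)
    finally show "homotopic_paths_in X x (a +++ y)" .
  next
    assume h: "homotopic_paths_in X x (a +++ y)"
    have "homotopic_paths_in X (path_reverse a +++ x) (path_reverse a +++ (a +++ y))"
      using join[OF refl[OF pa(2)] h] by (simp add: ends)
    also have "homotopic_paths_in X \<dots> ((path_reverse a +++ a) +++ y)"
      using homotopic_paths_in_assoc[OF pa(2,1) py] by (simp add: ends homotopic_paths_in_sym)
    also have "homotopic_paths_in X \<dots> ((\<lambda>t. x0) +++ y)"
      using join[OF homotopic_paths_in_reverse_join[OF pa(1)] refl[OF py]]
      by (simp add: ends path_join_def)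
    also have "homotopic_paths_in X \<dots> y"
      using homotopic_paths_in_const_join[OF py] by (simp add: ends)
    finally show "homotopic_paths_in X (path_reverse a +++ x) y" .
  qed
qed

lemma homotopic_paths_in_join_reverse_right_iff:
  assumes b: "loop_at X x0 b" and x: "loop_at X x0 x" and y: "loop_at X x0 y"
  shows "homotopic_paths_in X (x +++ path_reverse b) y \<longleftrightarrow> homotopic_paths_in X x (y +++ b)"
proof -
  have pb: "pathin X b" "pathin X (path_reverse b)" and px: "pathin X x" and py: "pathin X y"
    using b x y by (auto simp: loop_at_def pathin_path_reverse)
  have ends: "b 0 = x0" "b 1 = x0" "x 1 = x0" "y 0 = x0" "y 1 = x0"
    "path_reverse b 0 = x0" "path_reverse b 1 = x0"
    using b x y by (auto simp: loop_at_def path_reverse_def)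
  note refl = homotopic_paths_in_refl and join = homotopic_paths_in_join
  show ?thesis
  proof
    assume h: "homotopic_paths_in X (x +++ path_reverse b) y"
    have "homotopic_paths_in X x (x +++ (\<lambda>t. x0))"
      using homotopic_paths_in_join_const[OF px] ends by (simp add: homotopic_paths_in_sym)
    also have "homotopic_paths_in X \<dots> (x +++ (path_reverse b +++ b))"
      using join[OF refl[OF px] homotopic_paths_in_sym[OF homotopic_paths_in_reverse_join[OF pb(1)]]]
      by (simp add: ends)
    also have "homotopic_paths_in X \<dots> ((x +++ path_reverse b) +++ b)"
      using homotopic_paths_in_assoc[OF px pb(2,1)] by (simp add: ends homotopic_paths_in_sym)
    also have "homotopic_paths_in X \<dots> (y +++ b)"
      using join[OF h refl[OF pb(1)]] by (simp add: ends path_join_def)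
    finally show "homotopic_paths_in X x (y +++ b)" .
  next
    assume h: "homotopic_paths_in X x (y +++ b)"
    have "homotopic_paths_in X (x +++ path_reverse b) ((y +++ b) +++ path_reverse b)"
      using join[OF h refl[OF pb(2)]] by (simp add: ends)
    also have "homotopic_paths_in X \<dots> (y +++ (b +++ path_reverse b))"
      using homotopic_paths_in_assoc[OF py pb] by (simp add: ends)
    also have "homotopic_paths_in X \<dots> (y +++ (\<lambda>t. x0))"
      using join[OF refl[OF py] homotopic_paths_in_join_reverse[OF pb(1)]]
      by (simp add: ends path_join_def)
    also have "homotopic_paths_in X \<dots> y"
      using homotopic_paths_in_join_const[OF py] by (simp add: ends)
    finally show "homotopic_paths_in X (x +++ path_reverse b) y" .
  qed
qed

section \<open>The whisker topology\<close>

definition whisker_nbhd :: "'a topology \<Rightarrow> 'a \<Rightarrow> (real \<Rightarrow> 'a) \<Rightarrow> 'a set \<Rightarrow> (real \<Rightarrow> 'a) set set"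
  where "whisker_nbhd X x0 a U = {loop_class X x0 (a +++ b) | b. loop_at (subtopology X U) x0 b}"

lemma whisker_basis_eq:
  "whisker_basis X x0 = {whisker_nbhd X x0 a U | a U. loop_at X x0 a \<and> openin X U \<and> x0 \<in> U}"
  by (simp add: whisker_basis_def whisker_nbhd_def)

lemma loop_class_mem_whisker_nbhd_iff:
  assumes a: "loop_at X x0 a" and a': "loop_at X x0 a'"
  shows "loop_class X x0 a' \<in> whisker_nbhd X x0 a U \<longleftrightarrow>
           (\<exists>c. loop_at (subtopology X U) x0 c \<and> homotopic_paths_in X (path_reverse a +++ a') c)"
proof -
  have "loop_class X x0 a' = loop_class X x0 (a +++ c) \<longleftrightarrow>
          homotopic_paths_in X (path_reverse a +++ a') c"
    if "loop_at (subtopology X U) x0 c" for c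
    using that loop_at_subtopology_imp[OF that] a a'
    by (simp add: loop_class_eq_iff loop_at_path_join homotopic_paths_in_reverse_join_left_iff)
  then show ?thesis
    unfolding whisker_nbhd_def by blast
qed

lemma loop_class_mem_whisker_nbhd:
  assumes a: "loop_at X x0 a" and "x0 \<in> U"
  shows "loop_class X x0 a \<in> whisker_nbhd X x0 a U"
proof -
  have "loop_at (subtopology X U) x0 (\<lambda>t. x0)"
    using assms loop_at_imp_in_topspace[OF a] by simp
  moreover have "homotopic_paths_in X (path_reverse a +++ a) (\<lambda>t. x0)"
    using homotopic_paths_in_reverse_join[of X a] a by (simp add: loop_at_def)
  ultimately show ?thesis
    using loop_class_mem_whisker_nbhd_iff[OF a a] by blast
qed

lemma whisker_nbhd_subset:
  assumes a: "loop_at X x0 a" and a': "loop_at X x0 a'"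
    and mem: "loop_class X x0 a' \<in> whisker_nbhd X x0 a U"
  shows "whisker_nbhd X x0 a' U \<subseteq> whisker_nbhd X x0 a U"
proof
  obtain b where b: "loop_at (subtopology X U) x0 b" and "loop_class X x0 a' = loop_class X x0 (a +++ b)"
    using mem unfolding whisker_nbhd_def by blast
  then have ab: "homotopic_paths_in X a' (a +++ b)"
    using a a' by (simp add: loop_class_eq_iff loop_at_path_join loop_at_subtopology_imp)
  fix g assume "g \<in> whisker_nbhd X x0 a' U"
  then obtain c where c: "loop_at (subtopology X U) x0 c" and g: "g = loop_class X x0 (a' +++ c)"
    unfolding whisker_nbhd_def by blast
  have lb: "loop_at X x0 b" and lc: "loop_at X x0 c"
    using b c by (auto intro: loop_at_subtopology_imp)
  have "homotopic_paths_in X (a' +++ c) ((a +++ b) +++ c)"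
    using homotopic_paths_in_join[OF ab homotopic_paths_in_refl] lc a'
    by (simp add: loop_at_def)
  also have "homotopic_paths_in X \<dots> (a +++ (b +++ c))"
    using a lb lc by (intro homotopic_paths_in_assoc) (simp_all add: loop_at_def)
  finally have "g = loop_class X x0 (a +++ (b +++ c))"
    unfolding g using a a' lb lc by (simp add: loop_class_eq_iff loop_at_path_join)
  moreover have "loop_at (subtopology X U) x0 (b +++ c)"
    using b c by (rule loop_at_path_join)
  ultimately show "g \<in> whisker_nbhd X x0 a U"
    unfolding whisker_nbhd_def by blast
qed

lemma loop_class_mem_whisker_nbhd_sym:
  assumes a: "loop_at X x0 a" and a': "loop_at X x0 a'"
    and "loop_class X x0 a' \<in> whisker_nbhd X x0 a U"
  shows "loop_class X x0 a \<in> whisker_nbhd X x0 a' U"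
proof -
  obtain b where b: "loop_at (subtopology X U) x0 b" and "loop_class X x0 a' = loop_class X x0 (a +++ b)"
    using assms(3) unfolding whisker_nbhd_def by blast
  then have "homotopic_paths_in X (a' +++ path_reverse b) a"
    using a a' loop_at_subtopology_imp[OF b]
    by (simp add: loop_class_eq_iff loop_at_path_join homotopic_paths_in_join_reverse_right_iff)
  then have "loop_class X x0 a = loop_class X x0 (a' +++ path_reverse b)"
    using a a' loop_at_subtopology_imp[OF b]
    by (simp add: loop_class_eq_iff loop_at_path_join loop_at_path_reverse homotopic_paths_in_sym)
  moreover have "loop_at (subtopology X U) x0 (path_reverse b)"
    using b by (rule loop_at_path_reverse)
  ultimately show ?thesis
    unfolding whisker_nbhd_def by blast
qed

text \<open>For fixed \<open>U\<close>, the sets \<open>whisker_nbhd X x0 a U\<close> are the left cosets of the image of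
  \<open>\<pi>\<^sub>1(U, x0)\<close>, so any two of them coincide or are disjoint.\<close>

lemma whisker_nbhd_eq:
  assumes "loop_at X x0 a" "loop_at X x0 a'" "loop_class X x0 a' \<in> whisker_nbhd X x0 a U"
  shows "whisker_nbhd X x0 a' U = whisker_nbhd X x0 a U"
  using whisker_nbhd_subset[OF assms]
    whisker_nbhd_subset[OF assms(2,1) loop_class_mem_whisker_nbhd_sym[OF assms]]
  by (rule subset_antisym)

lemma whisker_nbhd_mono:
  assumes "V \<subseteq> U"
  shows "whisker_nbhd X x0 a V \<subseteq> whisker_nbhd X x0 a U"
  unfolding whisker_nbhd_def by (blast intro: loop_at_subtopology_mono[OF _ assms])

lemma whisker_nbhd_subset_fundamental_group:
  "loop_at X x0 a \<Longrightarrow> whisker_nbhd X x0 a U \<subseteq> fundamental_group X x0"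
  unfolding whisker_nbhd_def fundamental_group_def
  by (auto intro: loop_at_path_join loop_at_subtopology_imp)

lemma topspace_whisker_topology:
  assumes "x0 \<in> topspace X"
  shows "topspace (whisker_topology X x0) = fundamental_group X x0"
proof
  show "topspace (whisker_topology X x0) \<subseteq> fundamental_group X x0"
    unfolding whisker_topology_def topology_generated_by_topspace whisker_basis_eq
    using whisker_nbhd_subset_fundamental_group by fastforce
  show "fundamental_group X x0 \<subseteq> topspace (whisker_topology X x0)"
  proof
    fix g assume "g \<in> fundamental_group X x0"
    then obtain a where "loop_at X x0 a" "g = loop_class X x0 a"
      unfolding fundamental_group_def by blast
    then show "g \<in> topspace (whisker_topology X x0)"
      unfolding whisker_topology_def topology_generated_by_topspace whisker_basis_eq
      using loop_class_mem_whisker_nbhd[of X x0 a "topspace X"] assms by blast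
  qed
qed

lemma openin_whisker_nbhd:
  "loop_at X x0 a \<Longrightarrow> openin X U \<Longrightarrow> x0 \<in> U \<Longrightarrow>
     openin (whisker_topology X x0) (whisker_nbhd X x0 a U)"
  unfolding whisker_topology_def by (rule topology_generated_by_Basis) (auto simp: whisker_basis_eq)

lemma whisker_basis_Int:
  assumes "B1 \<in> whisker_basis X x0" "B2 \<in> whisker_basis X x0" "g \<in> B1 \<inter> B2"
  shows "\<exists>B\<in>whisker_basis X x0. g \<in> B \<and> B \<subseteq> B1 \<inter> B2"
proof -
  obtain a1 U1 a2 U2 where B: "B1 = whisker_nbhd X x0 a1 U1" "B2 = whisker_nbhd X x0 a2 U2"
    and a: "loop_at X x0 a1" "loop_at X x0 a2" and U: "openin X U1" "x0 \<in> U1" "openin X U2" "x0 \<in> U2"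
    using assms(1,2) unfolding whisker_basis_eq by blast
  obtain a where a': "loop_at X x0 a" "g = loop_class X x0 a"
    using assms(3) whisker_nbhd_subset_fundamental_group[OF a(1)]
    unfolding B fundamental_group_def by blast
  have "whisker_nbhd X x0 a U1 = B1" "whisker_nbhd X x0 a U2 = B2"
    using whisker_nbhd_eq[OF a(1) a'(1)] whisker_nbhd_eq[OF a(2) a'(1)] assms(3) a'(2)
    unfolding B by auto
  then have "whisker_nbhd X x0 a (U1 \<inter> U2) \<subseteq> B1 \<inter> B2"
    using whisker_nbhd_mono[of "U1 \<inter> U2"] by blast
  moreover have "whisker_nbhd X x0 a (U1 \<inter> U2) \<in> whisker_basis X x0"
    using a' U unfolding whisker_basis_eq by blast
  ultimately show ?thesis
    using loop_class_mem_whisker_nbhd[OF a'(1), of "U1 \<inter> U2"] a' U by blast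
qed

lemma openin_whisker_topology_obtains_whisker_nbhd:
  assumes "openin (whisker_topology X x0) V" "loop_at X x0 a" "loop_class X x0 a \<in> V"
  obtains U where "openin X U" "x0 \<in> U" "whisker_nbhd X x0 a U \<subseteq> V"
proof -
  obtain B where B: "B \<in> whisker_basis X x0" "loop_class X x0 a \<in> B" "B \<subseteq> V"
    using topology_generated_by_nbhd_base[of "whisker_basis X x0", OF whisker_basis_Int] assms(1,3)
    unfolding whisker_topology_def by blast
  then obtain a' U where U: "openin X U" "x0 \<in> U" and a': "loop_at X x0 a'"
    and B_eq: "B = whisker_nbhd X x0 a' U"
    unfolding whisker_basis_eq by blast
  then have "whisker_nbhd X x0 a U = B"
    using whisker_nbhd_eq[OF a' assms(2)] B(2) by simp
  then show thesis
    using that U B(3) by blast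
qed

lemma closedin_whisker_nbhd:
  assumes a: "loop_at X x0 a" and U: "openin X U" "x0 \<in> U"
  shows "closedin (whisker_topology X x0) (whisker_nbhd X x0 a U)"
proof -
  let ?W = "whisker_topology X x0" and ?N = "\<lambda>a. whisker_nbhd X x0 a U"
  have topspace: "topspace ?W = fundamental_group X x0"
    using loop_at_imp_in_topspace[OF a] by (rule topspace_whisker_topology)
  have "topspace ?W - ?N a = \<Union>{?N a' | a'. loop_at X x0 a' \<and> loop_class X x0 a' \<notin> ?N a}"
  proof (intro equalityI subsetI)
    fix g assume "g \<in> topspace ?W - ?N a"
    then obtain a' where "loop_at X x0 a'" "g = loop_class X x0 a'" "g \<notin> ?N a"
      unfolding topspace fundamental_group_def by blast
    moreover have "g \<in> ?N a'"
      using loop_class_mem_whisker_nbhd[OF \<open>loop_at X x0 a'\<close> U(2)] \<open>g = loop_class X x0 a'\<close>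
      by simp
    ultimately show "g \<in> \<Union>{?N a' | a'. loop_at X x0 a' \<and> loop_class X x0 a' \<notin> ?N a}"
      by blast
  next
    fix h assume "h \<in> \<Union>{?N a' | a'. loop_at X x0 a' \<and> loop_class X x0 a' \<notin> ?N a}"
    then obtain a' where a': "loop_at X x0 a'" "loop_class X x0 a' \<notin> ?N a" "h \<in> ?N a'"
      by blast
    then obtain a'' where a'': "loop_at X x0 a''" "h = loop_class X x0 a''"
      using whisker_nbhd_subset_fundamental_group[OF a'(1)] unfolding fundamental_group_def
      by blast
    have "h \<notin> ?N a"
    proof
      assume "h \<in> ?N a"
      moreover have "?N a'' = ?N a'"
        using whisker_nbhd_eq[OF a'(1) a''(1)] a'(3) a''(2) by simp
      ultimately have "?N a = ?N a'"
        using whisker_nbhd_eq[OF a a''(1)] a''(2) by simp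
      then show False
        using a'(2) loop_class_mem_whisker_nbhd[OF a'(1) U(2)] by simp
    qed
    then show "h \<in> topspace ?W - ?N a"
      using a'' unfolding topspace fundamental_group_def by blast
  qed
  then have "openin ?W (topspace ?W - ?N a)"
    using openin_whisker_nbhd U by (auto intro!: openin_Union)
  moreover have "?N a \<subseteq> topspace ?W"
    using whisker_nbhd_subset_fundamental_group[OF a] topspace by simp
  ultimately show ?thesis
    by (simp add: closedin_def)
qed

lemma whisker_topology_dim_le_0:
  assumes "x0 \<in> topspace X"
  shows "whisker_topology X x0 dim_le 0"
  unfolding dimension_le_0_neighbourhood_base_of_clopen neighbourhood_base_of
proof (intro allI impI)
  fix V g assume V: "openin (whisker_topology X x0) V \<and> g \<in> V"
  then obtain a where a: "loop_at X x0 a" "g = loop_class X x0 a"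
    using openin_subset topspace_whisker_topology[OF assms] unfolding fundamental_group_def by blast
  with V obtain U where U: "openin X U" "x0 \<in> U" and sub: "whisker_nbhd X x0 a U \<subseteq> V"
    by (metis openin_whisker_topology_obtains_whisker_nbhd)
  have "openin (whisker_topology X x0) (whisker_nbhd X x0 a U)"
    "closedin (whisker_topology X x0) (whisker_nbhd X x0 a U)" "g \<in> whisker_nbhd X x0 a U"
    using a U openin_whisker_nbhd closedin_whisker_nbhd loop_class_mem_whisker_nbhd by auto
  with sub show "\<exists>N C. openin (whisker_topology X x0) N \<and>
               (closedin (whisker_topology X x0) C \<and> openin (whisker_topology X x0) C) \<and>
               g \<in> N \<and> N \<subseteq> C \<and> C \<subseteq> V"
    by blast
qed

section \<open>Small loops\<close>

lemma small_loop_reverse_join_iff: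
  assumes "loop_at X x0 a" "loop_at X x0 a'"
  shows "small_loop X x0 (path_reverse a +++ a') \<longleftrightarrow>
           (\<forall>U. openin X U \<and> x0 \<in> U \<longrightarrow> loop_class X x0 a' \<in> whisker_nbhd X x0 a U)"
  using assms
  by (simp add: small_loop_def loop_class_mem_whisker_nbhd_iff loop_at_path_join loop_at_path_reverse)

lemma whisker_topology_inseparable_iff:
  assumes a: "loop_at X x0 a" and a': "loop_at X x0 a'"
  shows "(\<forall>V. openin (whisker_topology X x0) V \<longrightarrow> (loop_class X x0 a \<in> V \<longleftrightarrow> loop_class X x0 a' \<in> V))
           \<longleftrightarrow> small_loop X x0 (path_reverse a +++ a')"
  unfolding small_loop_reverse_join_iff[OF assms]
proof (intro iffI allI impI)
  fix U assume insep: "\<forall>V. openin (whisker_topology X x0) V \<longrightarrow>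
                         (loop_class X x0 a \<in> V \<longleftrightarrow> loop_class X x0 a' \<in> V)"
    and U: "openin X U \<and> x0 \<in> U"
  have "openin (whisker_topology X x0) (whisker_nbhd X x0 a U)"
    using openin_whisker_nbhd[OF a] U by simp
  moreover have "loop_class X x0 a \<in> whisker_nbhd X x0 a U"
    using loop_class_mem_whisker_nbhd[OF a] U by simp
  ultimately show "loop_class X x0 a' \<in> whisker_nbhd X x0 a U"
    using insep by simp
next
  fix V assume mem: "\<forall>U. openin X U \<and> x0 \<in> U \<longrightarrow> loop_class X x0 a' \<in> whisker_nbhd X x0 a U"
    and V: "openin (whisker_topology X x0) V" and "loop_class X x0 a \<in> V"
  with a obtain U where "openin X U" "x0 \<in> U" "whisker_nbhd X x0 a U \<subseteq> V"
    by (metis openin_whisker_topology_obtains_whisker_nbhd)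
  then show "loop_class X x0 a' \<in> V"
    using mem by auto
next
  fix V assume mem: "\<forall>U. openin X U \<and> x0 \<in> U \<longrightarrow> loop_class X x0 a' \<in> whisker_nbhd X x0 a U"
    and V: "openin (whisker_topology X x0) V" and "loop_class X x0 a' \<in> V"
  with a' obtain U where "openin X U" "x0 \<in> U" "whisker_nbhd X x0 a' U \<subseteq> V"
    by (metis openin_whisker_topology_obtains_whisker_nbhd)
  then show "loop_class X x0 a \<in> V"
    using mem loop_class_mem_whisker_nbhd_sym[OF a a', of U] by auto
qed

lemma t0_space_whisker_topology_iff:
  assumes "x0 \<in> topspace X"
  shows "t0_space (whisker_topology X x0) \<longleftrightarrow>
           (\<forall>a a'. loop_at X x0 a \<and> loop_at X x0 a' \<and> small_loop X x0 (path_reverse a +++ a')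
                   \<longrightarrow> loop_class X x0 a = loop_class X x0 a')"
proof -
  have separated_iff:
    "(\<exists>V. openin (whisker_topology X x0) V \<and> (loop_class X x0 a \<notin> V \<longleftrightarrow> loop_class X x0 a' \<in> V))
       \<longleftrightarrow> \<not> small_loop X x0 (path_reverse a +++ a')"
    if "loop_at X x0 a" "loop_at X x0 a'" for a a'
    using whisker_topology_inseparable_iff[OF that] by blast
  show ?thesis
    unfolding t0_space_def topspace_whisker_topology[OF assms] fundamental_group_def
    by (auto simp: separated_iff)
qed

lemma small_loop_const:
  assumes "x0 \<in> topspace X"
  shows "small_loop X x0 (\<lambda>t. x0)"
  unfolding small_loop_def
proof (intro conjI allI impI)
  fix U assume "openin X U \<and> x0 \<in> U"
  then show "\<exists>c. loop_at (subtopology X U) x0 c \<and> homotopic_paths_in X (\<lambda>t. x0) c"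
    using assms by (intro exI[of _ "\<lambda>t. x0"]) (simp add: homotopic_paths_in_refl)
qed (use assms in simp)

lemma small_loop_homotopic:
  assumes "small_loop X x0 b" "homotopic_paths_in X b b'" "loop_at X x0 b'"
  shows "small_loop X x0 b'"
  using assms unfolding small_loop_def by (meson homotopic_paths_in_sym homotopic_paths_in_trans)

lemma small_loop_group_eq_trivial_iff:
  assumes x0: "x0 \<in> topspace X"
  shows "small_loop_group X x0 = {loop_class X x0 (\<lambda>t. x0)} \<longleftrightarrow>
           (\<forall>a a'. loop_at X x0 a \<and> loop_at X x0 a' \<and> small_loop X x0 (path_reverse a +++ a')
                   \<longrightarrow> loop_class X x0 a = loop_class X x0 a')"
proof (intro iffI allI impI)
  fix a a' assume trivial: "small_loop_group X x0 = {loop_class X x0 (\<lambda>t. x0)}"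
    and aa': "loop_at X x0 a \<and> loop_at X x0 a' \<and> small_loop X x0 (path_reverse a +++ a')"
  then have "loop_class X x0 (path_reverse a +++ a') = loop_class X x0 (\<lambda>t. x0)"
    unfolding small_loop_group_def by blast
  then have "homotopic_paths_in X a' (a +++ (\<lambda>t. x0))"
    using aa' x0 homotopic_paths_in_reverse_join_left_iff[of X x0 a a' "\<lambda>t. x0"]
    by (simp add: loop_class_eq_iff loop_at_path_join loop_at_path_reverse)
  also have "homotopic_paths_in X \<dots> a"
    using homotopic_paths_in_join_const[of X a] aa' by (simp add: loop_at_def)
  finally show "loop_class X x0 a = loop_class X x0 a'"
    using aa' by (simp add: loop_class_eq_iff homotopic_paths_in_sym)
next
  assume cancel: "\<forall>a a'. loop_at X x0 a \<and> loop_at X x0 a' \<and> small_loop X x0 (path_reverse a +++ a')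
                         \<longrightarrow> loop_class X x0 a = loop_class X x0 a'"
  show "small_loop_group X x0 = {loop_class X x0 (\<lambda>t. x0)}"
  proof (intro equalityI subsetI)
    fix g assume "g \<in> small_loop_group X x0"
    then obtain b where b: "small_loop X x0 b" "g = loop_class X x0 b"
      unfolding small_loop_group_def by blast
    have "homotopic_paths_in X b ((\<lambda>t. x0) +++ b)"
      using homotopic_paths_in_const_join[of X b] b(1)
      by (simp add: small_loop_def loop_at_def homotopic_paths_in_sym)
    moreover have "loop_at X x0 ((\<lambda>t. x0) +++ b)"
      using b(1) x0 by (simp add: small_loop_def loop_at_path_join)
    ultimately have "small_loop X x0 (path_reverse (\<lambda>t. x0) +++ b)"
      using small_loop_homotopic[OF b(1)] by (simp add: path_reverse_def)
    moreover have "loop_at X x0 b"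
      using b(1) by (simp add: small_loop_def)
    ultimately show "g \<in> {loop_class X x0 (\<lambda>t. x0)}"
      using cancel b(2) x0 by simp
  qed (use small_loop_const[OF x0] in \<open>auto simp: small_loop_group_def\<close>)
qed

theorem proposition3p3:
  fixes X :: "'a topology" and x0 :: 'a
  assumes "connected_space X" and "locally_path_connected_space X" and "x0 \<in> topspace X"
  shows "(t0_space (whisker_topology X x0) \<longleftrightarrow> t1_space (whisker_topology X x0))
       \<and> (t0_space (whisker_topology X x0) \<longleftrightarrow> Hausdorff_space (whisker_topology X x0))
       \<and> (t0_space (whisker_topology X x0) \<longleftrightarrow>
            regular_space (whisker_topology X x0) \<and> t1_space (whisker_topology X x0))
       \<and> (t0_space (whisker_topology X x0) \<longleftrightarrow>
            small_loop_group X x0 = {loop_class X x0 (\<lambda>t. x0)})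
       \<and> (t0_space (whisker_topology X x0) \<longleftrightarrow> totally_separated_space (whisker_topology X x0))
       \<and> regular_space (whisker_topology X x0)"
proof -
  let ?W = "whisker_topology X x0"
  have dim0: "?W dim_le 0"
    using assms(3) by (rule whisker_topology_dim_le_0)
  then have regular: "regular_space ?W"
    by (rule zero_dimensional_imp_regular_space)
  have "t0_space ?W \<Longrightarrow> Hausdorff_space ?W"
    using regular by (rule regular_t0_imp_Hausdorff_space)
  moreover have "t0_space ?W \<Longrightarrow> totally_separated_space ?W"
    using dim0 by (rule dim_le_0_t0_imp_totally_separated_space)
  moreover have "t0_space ?W \<longleftrightarrow> small_loop_group X x0 = {loop_class X x0 (\<lambda>t. x0)}"
    using assms(3) by (simp add: t0_space_whisker_topology_iff small_loop_group_eq_trivial_iff)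
  ultimately show ?thesis
    using regular Hausdorff_imp_t1_space t1_imp_t0_space totally_separated_imp_t0_space by blast
qed

end
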